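(* Let $y_1, \ldots, y_n \in \mathfrak m$ be a minimal system of generators of $\mathfrak m$ (so $R = k[[y_1,\ldots,y_n]]$). Then, after possibly reordering $y_1, \ldots, y_n$, there exist elements $x_1, \ldots, x_n \in R$ and $z_1, \ldots, z_n \in R$ such that for all $i = 1, \ldots, n$: (1) $v(x_i) = a_i$; (2) $z_i \in k[x_1, \ldots, x_{i-1}]$ (a polynomial in $x_1,\ldots,x_{i-1}$), with $z_1 = 0$; (3) $y_i = x_i + z_i$.
   Context: Let $k$ be a field and let $(R,\mathfrak m)$ be a complete local noetherian domain of dimension $1$ containing $k$ with $R/\mathfrak m = k$, with normalization $\overline R$ having residue field $k$, so $\overline R = k[[t]]$ and $R \subseteq k[[t]]$ is finite birational. Let $v$ be the $t$-adic valuation. For $A \subseteq k((t))$ let $v(A) = \{v(f): f\in A\setminus\{0\}\}$. The Herzog–Kunz sequence of $R$ is $v(\mathfrak m)\setminus v(\mathfrak m^2)$ listed increasingly as $a_1 < \cdots < a_n$ (with $n = \mathrm{edim}(R)$). For $y_i\in\mathfrak m$, $k[[y_1,\ldots,y_n]]$ is the image of $k[[Y_1,\ldots,Y_n]]\to k[[t]]$, $Y_i\mapsto y_i$. *)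

theory Defs
  imports "HOL-Computational_Algebra.Formal_Power_Series"
begin

text \<open>Setting: k is the field type 'a, k[[t]] is 'a fps, v is subdegree.
  R is a k-subalgebra of k[[t]] such that k[[t]] is finite and birational over R,
  which (for such rings) amounts to: R contains t^c k[[t]] for some c.\<close>

definition val :: "'a::zero fps set \<Rightarrow> nat set" where
  "val A = subdegree ` (A - {0})"

definition max_ideal :: "'a::zero fps set \<Rightarrow> 'a fps set" where
  "max_ideal R = {f \<in> R. fps_nth f 0 = 0}"

definition ideal_sq :: "'a::comm_ring_1 fps set \<Rightarrow> 'a fps set" where
  "ideal_sq M = {(\<Sum>j<N. a j * b j) | (N::nat) a b. \<forall>j<N. a j \<in> M \<and> b j \<in> M}"

text \<open>Herzog--Kunz sequence v(m) - v(m^2), listed increasingly (0-indexed list).\<close>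
definition herzog_kunz :: "'a::comm_ring_1 fps set \<Rightarrow> nat list" where
  "herzog_kunz R = sorted_list_of_set (val (max_ideal R) - val (ideal_sq (max_ideal R)))"

definition complete_local_branch :: "'a::field fps set \<Rightarrow> bool" where
  "complete_local_branch R \<longleftrightarrow>
     (\<forall>c. fps_const c \<in> R) \<and>
     (\<forall>f\<in>R. \<forall>g\<in>R. f + g \<in> R \<and> f * g \<in> R \<and> - f \<in> R) \<and>
     (\<exists>c. \<forall>f. (\<forall>j<c. fps_nth f j = 0) \<longrightarrow> f \<in> R)"

inductive_set k_alg :: "'a::field fps set \<Rightarrow> 'a fps set" for S where
  const: "fps_const c \<in> k_alg S"
| gen: "s \<in> S \<Longrightarrow> s \<in> k_alg S"
| add: "a \<in> k_alg S \<Longrightarrow> b \<in> k_alg S \<Longrightarrow> a + b \<in> k_alg S"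
| mult: "a \<in> k_alg S \<Longrightarrow> b \<in> k_alg S \<Longrightarrow> a * b \<in> k_alg S"

definition generates :: "'a::comm_ring_1 fps set \<Rightarrow> 'a fps set \<Rightarrow> nat set \<Rightarrow> (nat \<Rightarrow> 'a fps) \<Rightarrow> bool" where
  "generates R M I y \<longleftrightarrow> M = {(\<Sum>i\<in>I. r i * y i) | r. \<forall>i\<in>I. r i \<in> R}"

definition minimal_generators :: "'a::comm_ring_1 fps set \<Rightarrow> 'a fps set \<Rightarrow> nat \<Rightarrow> (nat \<Rightarrow> 'a fps) \<Rightarrow> bool" where
  "minimal_generators R M n y \<longleftrightarrow>
     (\<forall>i<n. y i \<in> M) \<and> generates R M {..<n} y \<and>
     (\<forall>j<n. \<not> generates R M ({..<n} - {j}) y)"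

end

(*
  Build x_0, x_1, ... greedily. For the next value a_i, polynomials in x_0, ..., x_(i-1) approximate
  every element of m modulo t^(a_i): raising the order by one only needs an element of value N,
  which is some x_l when N is in v(m) - v(m^2) and comes from an approximation of m^2 otherwise.
  Approximating the generators modulo t^(a_i) in this way, exactly for those already used, some
  unused y_j has an error of value exactly a_i; otherwise a_i would be a value of
  k[x_0, ..., x_(i-1)] intersected with m, whose values lie in {a_0, ..., a_(i-1)} and v(m^2).
  That error is x_i, and z_i = y_j - x_i. The generators picked are distinct, so n is at least
  the length of the sequence; conversely an unused generator would be superfluous, since an ideal
  realizing all of v(m) - v(m^2) contains m (a Nakayama-type argument through the conductor).
*)
theory Submission
  imports Defs
begin

unbundle fps_syntax

section \<open>Power series vanishing to a given order\<close>

definition vanishes_below :: "nat \<Rightarrow> 'a::zero fps \<Rightarrow> bool" where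
  "vanishes_below N f \<longleftrightarrow> (\<forall>j<N. f $ j = 0)"

lemma vanishes_below_mono: "vanishes_below N f \<Longrightarrow> K \<le> N \<Longrightarrow> vanishes_below K f"
  by (auto simp: vanishes_below_def)

lemma vanishes_below_0 [simp]: "vanishes_below N 0"
  by (simp add: vanishes_below_def)

lemma vanishes_below_Suc: "vanishes_below (Suc N) f \<longleftrightarrow> vanishes_below N f \<and> f $ N = 0"
  by (auto simp: vanishes_below_def less_Suc_eq)

lemma vanishes_below_add:
  "vanishes_below N f \<Longrightarrow> vanishes_below N g \<Longrightarrow> vanishes_below N (f + g :: 'a::monoid_add fps)"
  by (simp add: vanishes_below_def)

lemma vanishes_below_diff:
  "vanishes_below N f \<Longrightarrow> vanishes_below N g \<Longrightarrow> vanishes_below N (f - g :: 'a::group_add fps)"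
  by (simp add: vanishes_below_def)

lemma vanishes_below_sum:
  "(\<And>i. i \<in> I \<Longrightarrow> vanishes_below N (f i)) \<Longrightarrow> vanishes_below N (\<Sum>i\<in>I. f i :: 'a::comm_monoid_add fps)"
  by (simp add: vanishes_below_def fps_sum_nth)

lemma vanishes_below_const_mult:
  "vanishes_below N f \<Longrightarrow> vanishes_below N (fps_const c * f :: 'a::ring fps)"
  by (simp add: vanishes_below_def)

lemma vanishes_below_mult:
  assumes "vanishes_below N f" "vanishes_below K (g :: 'a::comm_ring_1 fps)"
  shows "vanishes_below (N + K) (f * g)"
  unfolding vanishes_below_def fps_mult_nth
proof (intro allI impI sum.neutral ballI)
  fix j i assume "j < N + K" "i \<in> {0..j}"
  then have "i < N \<or> j - i < K" by auto
  then show "f $ i * g $ (j - i) = 0"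
    using assms by (auto simp: vanishes_below_def)
qed

lemma vanishes_below_subdegree: "vanishes_below (subdegree f) f"
  by (simp add: vanishes_below_def nth_less_subdegree_zero)

lemma vanishes_below_iff: "vanishes_below N f \<longleftrightarrow> f = 0 \<or> N \<le> subdegree f"
proof
  assume "vanishes_below N f"
  then show "f = 0 \<or> N \<le> subdegree f"
    by (metis leI nth_subdegree_nonzero vanishes_below_def)
qed (auto intro: vanishes_below_mono[OF vanishes_below_subdegree])

lemma subdegree_eq_if_vanishes_below:
  "vanishes_below N f \<Longrightarrow> f $ N \<noteq> 0 \<Longrightarrow> f \<noteq> 0 \<and> subdegree f = N"
  by (auto simp: vanishes_below_def intro: subdegreeI)

lemma vanishes_below_dvdE:
  fixes f h :: "'a::field fps"
  assumes "f \<noteq> 0" "vanishes_below (subdegree f + c) h"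
  obtains w where "vanishes_below c w" "h = f * w"
proof (cases "h = 0")
  case False
  then have "subdegree f + c \<le> subdegree h" using assms(2) by (simp add: vanishes_below_iff)
  then have "h = f * (h / f)" "vanishes_below c (h / f)"
    using assms(1) fps_times_divide_eq[of f h]
    by (auto simp: mult.commute vanishes_below_def intro: fps_divide_nth_below)
  then show ?thesis by (rule that[rotated])
qed (use that[of 0] in simp)

section \<open>Polynomial expressions and values\<close>

lemma k_alg_mono: assumes "S \<subseteq> T" shows "p \<in> k_alg S \<Longrightarrow> p \<in> k_alg T"
  by (induction p rule: k_alg.induct) (use assms in \<open>auto intro: k_alg.intros\<close>)

lemma k_alg_subset_k_alg: assumes "S \<subseteq> k_alg T" shows "p \<in> k_alg S \<Longrightarrow> p \<in> k_alg T"
  by (induction p rule: k_alg.induct) (use assms in \<open>auto intro: k_alg.intros\<close>)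

lemma k_alg_zero: "0 \<in> k_alg S"
  using k_alg.const[of 0] by simp

lemma k_alg_sum: "(\<And>i. i \<in> I \<Longrightarrow> f i \<in> k_alg S) \<Longrightarrow> (\<Sum>i\<in>I. f i) \<in> k_alg S"
  by (induction I rule: infinite_finite_induct) (auto intro: k_alg.add k_alg_zero)

lemma k_alg_const_mult: "p \<in> k_alg S \<Longrightarrow> fps_const c * p \<in> k_alg S"
  by (auto intro: k_alg.intros)

lemma k_alg_diff: "p \<in> k_alg S \<Longrightarrow> q \<in> k_alg S \<Longrightarrow> p - q \<in> k_alg S"
  using k_alg.add[OF _ k_alg_const_mult, of p S q "-1"] by (simp add: fps_const_neg[symmetric])

lemma k_alg_empty: "p \<in> k_alg {} \<Longrightarrow> p = fps_const (p $ 0)"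
proof (induction p rule: k_alg.induct)
  case (add a b)
  then show ?case by (metis fps_const_add fps_add_nth)
next
  case (mult a b)
  then show ?case by (metis fps_const_mult fps_mult_nth_0)
qed auto

lemma val_memI: "f \<in> A \<Longrightarrow> f \<noteq> 0 \<Longrightarrow> subdegree f \<in> val A"
  by (auto simp: val_def)

lemma val_memE:
  assumes "w \<in> val A" obtains f where "f \<in> A" "f \<noteq> 0" "subdegree f = w"
  using assms by (auto simp: val_def)

lemma subdegree_lincomb:
  fixes x :: "nat \<Rightarrow> 'a::field fps"
  assumes x: "\<And>l. l < i \<Longrightarrow> x l \<noteq> 0" and inj: "inj_on (\<lambda>l. subdegree (x l)) {..<i}"
    and L: "L = (\<Sum>l<i. fps_const (d l) * x l)" "L \<noteq> 0"
  shows "subdegree L \<in> (\<lambda>l. subdegree (x l)) ` {..<i}"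
proof -
  define D where "D = {l. l < i \<and> d l \<noteq> 0}"
  have "finite D" by (simp add: D_def)
  moreover have "D \<noteq> {}" using L by (auto simp: D_def intro!: sum.neutral)
  ultimately obtain l0 where l0: "l0 \<in> D" "\<forall>l\<in>D. \<not> subdegree (x l) < subdegree (x l0)"
    using arg_min_if_finite[of D "\<lambda>l. subdegree (x l)"] by blast
  have L_nth: "L $ j = d l0 * x l0 $ j" if j: "j \<le> subdegree (x l0)" for j
  proof -
    have "d l * x l $ j = 0" if "l < i" "l \<noteq> l0" for l
    proof (cases "l \<in> D")
      case True
      then have "subdegree (x l) \<noteq> subdegree (x l0)"
        using inj l0(1) that unfolding inj_on_def D_def by blast
      then have "j < subdegree (x l)" using l0(2) True j by fastforce
      then show ?thesis by (simp add: nth_less_subdegree_zero[of j "x l"])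
    next
      case False
      then show ?thesis using that by (simp add: D_def)
    qed
    then have "L $ j = (\<Sum>l\<in>{l0}. d l * x l $ j)"
      unfolding L(1) fps_sum_nth fps_mult_left_const_nth using l0(1)
      by (intro sum.mono_neutral_right) (auto simp: D_def)
    then show ?thesis by simp
  qed
  have "subdegree L = subdegree (x l0)"
  proof (rule subdegreeI)
    show "L $ subdegree (x l0) \<noteq> 0" using l0(1) x by (simp add: L_nth D_def)
    show "L $ j = 0" if "j < subdegree (x l0)" for j
      using that by (simp add: L_nth nth_less_subdegree_zero[of j "x l0"])
  qed
  then show ?thesis using l0(1) by (simp add: D_def)
qed

section \<open>The maximal ideal and its square\<close>

locale local_branch =
  fixes R :: "'a::field fps set"
  assumes branch: "complete_local_branch R"
begin

abbreviation "M \<equiv> max_ideal R"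
abbreviation "M2 \<equiv> ideal_sq M"

abbreviation hk_values :: "nat set" where
  "hk_values \<equiv> val M - val M2"

lemma R_const: "fps_const c \<in> R"
  and R_add: "f \<in> R \<Longrightarrow> g \<in> R \<Longrightarrow> f + g \<in> R"
  and R_mult: "f \<in> R \<Longrightarrow> g \<in> R \<Longrightarrow> f * g \<in> R"
  and R_uminus: "f \<in> R \<Longrightarrow> - f \<in> R"
  using branch by (auto simp: complete_local_branch_def)

lemma R_diff: "f \<in> R \<Longrightarrow> g \<in> R \<Longrightarrow> f - g \<in> R"
  using R_add[of f "- g"] R_uminus[of g] by simp

lemma R_zero: "0 \<in> R" and R_one: "1 \<in> R"
  using R_const[of 0] R_const[of 1] by simp_all

lemma k_alg_subset_R: assumes "S \<subseteq> R" shows "p \<in> k_alg S \<Longrightarrow> p \<in> R"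
  by (induction p rule: k_alg.induct) (use assms in \<open>auto intro: R_const R_add R_mult\<close>)

lemma conductor:
  obtains c where "c \<ge> 1" "\<And>f. vanishes_below c f \<Longrightarrow> f \<in> R"
proof -
  obtain c where "\<forall>f. vanishes_below c f \<longrightarrow> f \<in> R"
    using branch by (auto simp: complete_local_branch_def vanishes_below_def)
  then show ?thesis
    by (intro that[of "max c 1"]) (auto dest: vanishes_below_mono[of _ _ c])
qed

lemma mem_max_ideal: "f \<in> M \<longleftrightarrow> f \<in> R \<and> f $ 0 = 0"
  by (simp add: max_ideal_def)

lemma max_ideal_subset_R: "f \<in> M \<Longrightarrow> f \<in> R"
  by (simp add: mem_max_ideal)

lemma vanishes_below_1_if_max_ideal: "f \<in> M \<Longrightarrow> vanishes_below 1 f"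
  by (simp add: mem_max_ideal vanishes_below_def)

definition proper_ideal :: "'a fps set \<Rightarrow> bool" where
  "proper_ideal I \<longleftrightarrow> I \<subseteq> M \<and> 0 \<in> I \<and> (\<forall>f\<in>I. \<forall>g\<in>I. f + g \<in> I) \<and> (\<forall>r\<in>R. \<forall>f\<in>I. r * f \<in> I)"

lemma proper_ideal_max_ideal: "proper_ideal M"
  by (auto simp: proper_ideal_def mem_max_ideal R_zero intro: R_add R_mult)

lemma proper_ideal_sum:
  "proper_ideal I \<Longrightarrow> (\<And>i. i \<in> A \<Longrightarrow> f i \<in> I) \<Longrightarrow> (\<Sum>i\<in>A. f i) \<in> I"
  by (induction A rule: infinite_finite_induct) (auto simp: proper_ideal_def)

lemma proper_ideal_const_mult: "proper_ideal I \<Longrightarrow> f \<in> I \<Longrightarrow> fps_const c * f \<in> I"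
  by (simp add: proper_ideal_def R_const)

lemma max_ideal_add: "f \<in> M \<Longrightarrow> g \<in> M \<Longrightarrow> f + g \<in> M"
  and max_ideal_mult: "r \<in> R \<Longrightarrow> f \<in> M \<Longrightarrow> r * f \<in> M"
  using proper_ideal_max_ideal by (auto simp: proper_ideal_def)

lemma max_ideal_sum: "(\<And>i. i \<in> A \<Longrightarrow> f i \<in> M) \<Longrightarrow> (\<Sum>i\<in>A. f i) \<in> M"
  by (rule proper_ideal_sum[OF proper_ideal_max_ideal])

lemma max_ideal_const_mult: "f \<in> M \<Longrightarrow> fps_const c * f \<in> M"
  by (rule proper_ideal_const_mult[OF proper_ideal_max_ideal])

lemma max_ideal_diff: "f \<in> M \<Longrightarrow> g \<in> M \<Longrightarrow> f - g \<in> M"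
  by (simp add: mem_max_ideal R_diff)

lemma k_alg_in_proper_ideal:
  assumes I: "proper_ideal I" and SI: "S \<subseteq> I" and p: "p \<in> k_alg S" "p $ 0 = 0"
  shows "p \<in> I"
proof -
  have SR: "S \<subseteq> R" using SI I by (auto simp: proper_ideal_def mem_max_ideal)
  have "p - fps_const (p $ 0) \<in> I" using p(1)
  proof (induction p rule: k_alg.induct)
    case (const c)
    then show ?case using I by (simp add: proper_ideal_def)
  next
    case (gen s)
    then have "s $ 0 = 0" using SI I by (auto simp: proper_ideal_def mem_max_ideal)
    then show ?case using gen SI by auto
  next
    case (add a b)
    have "a + b - fps_const ((a + b) $ 0) = (a - fps_const (a $ 0)) + (b - fps_const (b $ 0))"
      by (simp add: algebra_simps flip: fps_const_add)
    then show ?case using add.IH I unfolding proper_ideal_def by metis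
  next
    case (mult a b)
    have "a * b - fps_const ((a * b) $ 0)
        = b * (a - fps_const (a $ 0)) + fps_const (a $ 0) * (b - fps_const (b $ 0))"
      by (simp add: algebra_simps flip: fps_const_mult)
    moreover have "b \<in> R" using k_alg_subset_R[OF SR mult.hyps(2)] .
    ultimately show ?case using mult.IH I by (simp add: proper_ideal_def R_const)
  qed
  then show ?thesis using p(2) by simp
qed

definition R_span :: "nat set \<Rightarrow> (nat \<Rightarrow> 'a fps) \<Rightarrow> 'a fps set" where
  "R_span T y = {(\<Sum>i\<in>T. r i * y i) | r. \<forall>i\<in>T. r i \<in> R}"

lemma generates_iff_R_span: "generates R M T y \<longleftrightarrow> M = R_span T y"
  by (simp add: generates_def R_span_def)

lemma proper_ideal_R_span:
  assumes "y ` T \<subseteq> M"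
  shows "proper_ideal (R_span T y)"
  unfolding proper_ideal_def
proof (intro conjI ballI subsetI)
  fix f assume "f \<in> R_span T y"
  then show "f \<in> M"
    using assms by (auto simp: R_span_def intro!: max_ideal_sum max_ideal_mult)
next
  show "0 \<in> R_span T y"
    unfolding R_span_def by (intro CollectI exI[of _ "\<lambda>_. 0"]) (simp add: R_zero)
next
  fix f g assume "f \<in> R_span T y" "g \<in> R_span T y"
  then obtain r s where "f = (\<Sum>i\<in>T. r i * y i)" "g = (\<Sum>i\<in>T. s i * y i)" "\<forall>i\<in>T. r i \<in> R \<and> s i \<in> R"
    by (auto simp: R_span_def)
  then show "f + g \<in> R_span T y"
    unfolding R_span_def
    by (intro CollectI exI[of _ "\<lambda>i. r i + s i"]) (auto simp: sum.distrib distrib_right intro: R_add)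
next
  fix \<rho> f assume "\<rho> \<in> R" "f \<in> R_span T y"
  then obtain r where "f = (\<Sum>i\<in>T. r i * y i)" "\<forall>i\<in>T. r i \<in> R"
    by (auto simp: R_span_def)
  then show "\<rho> * f \<in> R_span T y"
    using \<open>\<rho> \<in> R\<close> unfolding R_span_def
    by (intro CollectI exI[of _ "\<lambda>i. \<rho> * r i"]) (auto simp: sum_distrib_left mult.assoc intro: R_mult)
qed

lemma R_span_generator: "finite T \<Longrightarrow> j \<in> T \<Longrightarrow> y j \<in> R_span T y"
  unfolding R_span_def
  by (intro CollectI exI[of _ "\<lambda>i. if i = j then 1 else 0"]) (simp add: R_zero R_one if_distrib if_distribR cong: if_cong)

lemma mem_ideal_sq: "g \<in> M2 \<longleftrightarrow> (\<exists>(N::nat) a b. g = (\<Sum>j<N. a j * b j) \<and> (\<forall>j<N. a j \<in> M \<and> b j \<in> M))"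
  unfolding ideal_sq_def by blast

lemma ideal_sq_mult: "a \<in> M \<Longrightarrow> b \<in> M \<Longrightarrow> a * b \<in> M2"
  unfolding mem_ideal_sq by (intro exI[of _ "1::nat"] exI[of _ "\<lambda>_. a"] exI[of _ "\<lambda>_. b"]) simp

lemma proper_ideal_ideal_sq: "proper_ideal M2"
  unfolding proper_ideal_def
proof (intro conjI ballI subsetI)
  fix g assume "g \<in> M2"
  then show "g \<in> M"
    by (auto simp: mem_ideal_sq intro!: max_ideal_sum
        max_ideal_mult max_ideal_subset_R)
next
  show "0 \<in> M2"
    unfolding mem_ideal_sq by (intro exI[of _ "0::nat"]) simp
next
  fix f g assume "f \<in> M2" "g \<in> M2"
  then obtain K L :: nat and a b c d where
    fg: "f = (\<Sum>j<K. a j * b j)" "g = (\<Sum>j<L. c j * d j)"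
    and M: "\<forall>j<K. a j \<in> M \<and> b j \<in> M" "\<forall>j<L. c j \<in> M \<and> d j \<in> M"
    unfolding mem_ideal_sq by blast
  define a' where "a' j = (if j < K then a j else c (j - K))" for j
  define b' where "b' j = (if j < K then b j else d (j - K))" for j
  have "(\<Sum>j<K + L. a' j * b' j) = (\<Sum>j<K. a' j * b' j) + (\<Sum>j<L. a' (K + j) * b' (K + j))"
    by (induction L) simp_all
  also have "\<dots> = f + g" by (simp add: fg a'_def b'_def)
  finally show "f + g \<in> M2"
    unfolding mem_ideal_sq using M by (intro exI[of _ "K + L"] exI[of _ a'] exI[of _ b']) (auto simp: a'_def b'_def)
next
  fix r g assume "r \<in> R" "g \<in> M2"
  then obtain K :: nat and a b where "g = (\<Sum>j<K. a j * b j)" "\<forall>j<K. a j \<in> M \<and> b j \<in> M"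
    unfolding mem_ideal_sq by blast
  then show "r * g \<in> M2"
    unfolding mem_ideal_sq using \<open>r \<in> R\<close>
    by (intro exI[of _ K] exI[of _ "\<lambda>j. r * a j"] exI[of _ b])
      (auto simp: sum_distrib_left mult.assoc intro: max_ideal_mult)
qed

lemma ideal_sq_subset_max_ideal: "M2 \<subseteq> M"
  and ideal_sq_zero: "0 \<in> M2"
  and ideal_sq_add: "f \<in> M2 \<Longrightarrow> g \<in> M2 \<Longrightarrow> f + g \<in> M2"
  using proper_ideal_ideal_sq by (auto simp: proper_ideal_def)

lemma ideal_sq_sum: "(\<And>i. i \<in> A \<Longrightarrow> f i \<in> M2) \<Longrightarrow> (\<Sum>i\<in>A. f i) \<in> M2"
  by (rule proper_ideal_sum[OF proper_ideal_ideal_sq])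

lemma ideal_sq_const_mult: "f \<in> M2 \<Longrightarrow> fps_const c * f \<in> M2"
  by (rule proper_ideal_const_mult[OF proper_ideal_ideal_sq])

section \<open>Approximation by polynomial expressions\<close>

definition poly_approximable :: "'a fps set \<Rightarrow> 'a fps set \<Rightarrow> nat \<Rightarrow> bool" where
  "poly_approximable S A N \<longleftrightarrow> (\<forall>f\<in>A. \<exists>p \<in> k_alg S \<inter> A. vanishes_below N (f - p))"

lemma poly_approximable_ideal_sq_Suc:
  assumes "poly_approximable S M K"
  shows "poly_approximable S M2 (Suc K)"
  unfolding poly_approximable_def
proof
  fix g assume "g \<in> M2"
  then obtain L :: nat and a b where g: "g = (\<Sum>l<L. a l * b l)" and ab: "\<forall>l<L. a l \<in> M \<and> b l \<in> M"
    unfolding mem_ideal_sq by blast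
  have "\<forall>f\<in>M. \<exists>p. p \<in> k_alg S \<inter> M \<and> vanishes_below K (f - p)"
    using assms unfolding poly_approximable_def by blast
  then obtain approx where approx: "\<And>f. f \<in> M \<Longrightarrow> approx f \<in> k_alg S \<inter> M \<and> vanishes_below K (f - approx f)"
    by metis
  define pa where "pa l = approx (a l)" for l
  define pb where "pb l = approx (b l)" for l
  have pa: "pa l \<in> k_alg S \<inter> M \<and> vanishes_below K (a l - pa l)"
    and pb: "pb l \<in> k_alg S \<inter> M \<and> vanishes_below K (b l - pb l)" if "l < L" for l
    using approx ab that by (auto simp: pa_def pb_def)
  define e where "e = (\<Sum>l<L. pa l * pb l)"
  have "e \<in> k_alg S \<inter> M2"
    unfolding e_def using pa pb
    by (auto intro!: k_alg_sum k_alg.mult ideal_sq_sum ideal_sq_mult)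
  moreover have "vanishes_below (Suc K) (g - e)"
  proof -
    have "g - e = (\<Sum>l<L. (a l - pa l) * b l + pa l * (b l - pb l))"
      by (simp add: g e_def sum_subtractf[symmetric] algebra_simps)
    moreover have "vanishes_below (Suc K) ((a l - pa l) * b l + pa l * (b l - pb l))" if "l < L" for l
      using vanishes_below_mult[of K "a l - pa l" 1 "b l"] vanishes_below_mult[of 1 "pa l" K "b l - pb l"]
        pa[OF that] pb[OF that] ab that
      by (auto intro!: vanishes_below_add dest!: vanishes_below_1_if_max_ideal)
    ultimately show ?thesis by (auto intro: vanishes_below_sum)
  qed
  ultimately show "\<exists>p \<in> k_alg S \<inter> M2. vanishes_below (Suc K) (g - p)" by blast
qed

text \<open>A value \<open>N\<close> of \<open>M\<close> is taken from \<open>S\<close> itself if \<open>N \<notin> v(M\<^sup>2)\<close>, and from an approximation of an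
  element of \<open>M\<^sup>2\<close> of value \<open>N\<close> otherwise.\<close>

lemma val_k_alg_max_ideal:
  assumes SM: "S \<subseteq> M" and approx: "poly_approximable S M2 (Suc N)"
    and N: "N \<in> val M" and new: "N \<in> hk_values \<Longrightarrow> N \<in> val S"
  shows "N \<in> val (k_alg S \<inter> M)"
proof (cases "N \<in> val M2")
  case True
  then obtain e where e: "e \<in> M2" "e \<noteq> 0" "subdegree e = N" by (rule val_memE)
  then obtain q where q: "q \<in> k_alg S \<inter> M2" "vanishes_below (Suc N) (e - q)"
    using approx by (auto simp: poly_approximable_def)
  have "vanishes_below N q"
    using vanishes_below_diff[OF vanishes_below_subdegree[of e] vanishes_below_mono[OF q(2)]] e(3)
    by simp
  moreover have "q $ N \<noteq> 0" using q(2) e by (auto simp: vanishes_below_Suc)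
  ultimately show ?thesis
    using q(1) ideal_sq_subset_max_ideal subdegree_eq_if_vanishes_below val_memI[of q] by blast
next
  case False
  then obtain s where "s \<in> S" "s \<noteq> 0" "subdegree s = N"
    using new N by (auto elim: val_memE)
  moreover have "s \<in> k_alg S \<inter> M" using \<open>s \<in> S\<close> SM by (auto intro: k_alg.gen)
  ultimately show ?thesis using val_memI[of s] by blast
qed

text \<open>One more coefficient: the error term of value \<open>N\<close> is cancelled by an element of
  \<open>k[S] \<inter> M\<close> of value \<open>N\<close>.\<close>

lemma poly_approximable_max_ideal_Suc:
  assumes SM: "S \<subseteq> M" and approx: "poly_approximable S M N" "poly_approximable S M2 (Suc N)"
    and new: "N \<in> hk_values \<Longrightarrow> N \<in> val S"
  shows "poly_approximable S M (Suc N)"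
  unfolding poly_approximable_def
proof
  fix f assume "f \<in> M"
  then obtain p where p: "p \<in> k_alg S \<inter> M" "vanishes_below N (f - p)"
    using approx(1) by (auto simp: poly_approximable_def)
  show "\<exists>p \<in> k_alg S \<inter> M. vanishes_below (Suc N) (f - p)"
  proof (cases "(f - p) $ N = 0")
    case True
    then show ?thesis using p by (auto simp: vanishes_below_Suc)
  next
    case False
    then have "N \<in> val M"
      using subdegree_eq_if_vanishes_below[OF p(2)] \<open>f \<in> M\<close> p(1)
      by (metis IntD2 max_ideal_diff val_memI)
    then obtain s where s: "s \<in> k_alg S \<inter> M" "s \<noteq> 0" "subdegree s = N"
      using val_k_alg_max_ideal[OF SM approx(2) _ new] by (auto elim: val_memE)
    define p' where "p' = p + fps_const ((f - p) $ N / s $ N) * s"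
    have "p' \<in> k_alg S \<inter> M"
      using p(1) s(1) by (auto simp: p'_def intro: k_alg.add k_alg_const_mult max_ideal_add
          max_ideal_const_mult)
    moreover have "vanishes_below (Suc N) (f - p')"
      using p(2) s vanishes_below_subdegree[of s]
      by (auto simp: p'_def vanishes_below_Suc diff_diff_eq[symmetric]
          intro!: vanishes_below_diff vanishes_below_const_mult)
    ultimately show ?thesis by blast
  qed
qed

lemma poly_approximable_max_ideal:
  assumes "S \<subseteq> M" and "{w \<in> hk_values. w < B} \<subseteq> val S" and "N \<le> B"
  shows "poly_approximable S M N"
  using \<open>N \<le> B\<close>
proof (induction N)
  case 0
  have "0 \<in> k_alg S \<inter> M"
    using k_alg_zero proper_ideal_max_ideal by (simp add: proper_ideal_def)
  then show ?case
    by (auto simp: poly_approximable_def vanishes_below_def)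
next
  case (Suc N)
  then show ?case
    using assms by (intro poly_approximable_max_ideal_Suc poly_approximable_ideal_sq_Suc) auto
qed

definition linear_mod_sq :: "nat \<Rightarrow> (nat \<Rightarrow> 'a fps) \<Rightarrow> 'a fps set" where
  "linear_mod_sq i x = {fps_const \<alpha> + (\<Sum>l<i. fps_const (d l) * x l) + m | \<alpha> d m. m \<in> M2}"

lemma linear_mod_sq_intro:
  "m \<in> M2 \<Longrightarrow> fps_const \<alpha> + (\<Sum>l<i. fps_const (d l) * x l) + m \<in> linear_mod_sq i x"
  unfolding linear_mod_sq_def by blast

lemma linear_mod_sq_add:
  assumes "a \<in> linear_mod_sq i x" "b \<in> linear_mod_sq i x"
  shows "a + b \<in> linear_mod_sq i x"
proof -
  obtain \<alpha>1 d1 m1 \<alpha>2 d2 m2 where m: "m1 \<in> M2" "m2 \<in> M2"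
    and ab: "a = fps_const \<alpha>1 + (\<Sum>l<i. fps_const (d1 l) * x l) + m1"
            "b = fps_const \<alpha>2 + (\<Sum>l<i. fps_const (d2 l) * x l) + m2"
    using assms unfolding linear_mod_sq_def by blast
  have "a + b = fps_const (\<alpha>1 + \<alpha>2) + (\<Sum>l<i. fps_const (d1 l + d2 l) * x l) + (m1 + m2)"
    by (simp add: ab distrib_right sum.distrib flip: fps_const_add)
  then show ?thesis using m by (simp add: linear_mod_sq_intro ideal_sq_add)
qed

lemma linear_mod_sq_mult:
  assumes x: "x ` {..<i} \<subseteq> M" and "a \<in> linear_mod_sq i x" "b \<in> linear_mod_sq i x"
  shows "a * b \<in> linear_mod_sq i x"
proof -
  obtain \<alpha>1 d1 m1 \<alpha>2 d2 m2 where m: "m1 \<in> M2" "m2 \<in> M2"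
    and ab: "a = fps_const \<alpha>1 + (\<Sum>l<i. fps_const (d1 l) * x l) + m1"
            "b = fps_const \<alpha>2 + (\<Sum>l<i. fps_const (d2 l) * x l) + m2"
    using assms(2,3) unfolding linear_mod_sq_def by blast
  define L1 where "L1 = (\<Sum>l<i. fps_const (d1 l) * x l)"
  define L2 where "L2 = (\<Sum>l<i. fps_const (d2 l) * x l)"
  define m where "m = fps_const \<alpha>1 * m2 + fps_const \<alpha>2 * m1 + (L1 + m1) * (L2 + m2)"
  have L: "L1 \<in> M" "L2 \<in> M"
    unfolding L1_def L2_def using x
    by (auto intro!: max_ideal_sum max_ideal_const_mult)
  have "(\<Sum>l<i. fps_const (\<alpha>1 * d2 l + \<alpha>2 * d1 l) * x l) = fps_const \<alpha>1 * L2 + fps_const \<alpha>2 * L1"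
    unfolding L1_def L2_def
    by (simp add: distrib_right sum.distrib sum_distrib_left mult.assoc flip: fps_const_add fps_const_mult)
  then have "a * b = fps_const (\<alpha>1 * \<alpha>2) + (\<Sum>l<i. fps_const (\<alpha>1 * d2 l + \<alpha>2 * d1 l) * x l) + m"
    unfolding ab L1_def[symmetric] L2_def[symmetric] m_def
    by (simp add: algebra_simps flip: fps_const_mult)
  moreover have "m \<in> M2"
  proof -
    have "L1 + m1 \<in> M" "L2 + m2 \<in> M"
      using m L ideal_sq_subset_max_ideal by (auto intro: max_ideal_add)
    then have "(L1 + m1) * (L2 + m2) \<in> M2" by (rule ideal_sq_mult)
    moreover have "fps_const \<alpha>1 * m2 \<in> M2" "fps_const \<alpha>2 * m1 \<in> M2"
      using m by (auto intro: ideal_sq_const_mult)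
    ultimately show ?thesis unfolding m_def by (intro ideal_sq_add)
  qed
  ultimately show ?thesis by (simp add: linear_mod_sq_intro)
qed

lemma k_alg_subset_linear_mod_sq:
  assumes x: "x ` {..<i} \<subseteq> M"
  shows "P \<in> k_alg (x ` {..<i}) \<Longrightarrow> P \<in> linear_mod_sq i x"
proof (induction P rule: k_alg.induct)
  case (const c)
  show ?case using linear_mod_sq_intro[OF ideal_sq_zero, where \<alpha> = c and d = "\<lambda>_. 0"] by simp
next
  case (gen s)
  then obtain l0 where l0: "l0 < i" "s = x l0" by auto
  have "(\<Sum>l<i. fps_const (if l = l0 then 1 else 0) * x l) = (\<Sum>l<i. if l = l0 then x l else 0)"
    by (intro sum.cong) auto
  with l0 have "s = fps_const 0 + (\<Sum>l<i. fps_const (if l = l0 then 1 else 0) * x l) + 0" by simp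
  also have "\<dots> \<in> linear_mod_sq i x" by (rule linear_mod_sq_intro[OF ideal_sq_zero])
  finally show ?case .
qed (use x in \<open>auto intro: linear_mod_sq_add linear_mod_sq_mult\<close>)

lemma subdegree_k_alg:
  fixes i :: nat
  assumes x: "\<And>l. l < i \<Longrightarrow> x l \<in> M \<and> x l \<noteq> 0"
    and inj: "inj_on (\<lambda>l. subdegree (x l)) {..<i}"
    and new: "\<And>l. l < i \<Longrightarrow> subdegree (x l) \<notin> val M2"
    and Q: "Q \<in> k_alg (x ` {..<i})" "Q \<in> M" "Q \<noteq> 0"
  shows "subdegree Q \<in> (\<lambda>l. subdegree (x l)) ` {..<i} \<union> val M2"
proof -
  have "Q \<in> linear_mod_sq i x" using k_alg_subset_linear_mod_sq[OF _ Q(1)] x by blast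
  then obtain \<alpha> d m where m: "m \<in> M2" and Q_eq: "Q = fps_const \<alpha> + (\<Sum>l<i. fps_const (d l) * x l) + m"
    unfolding linear_mod_sq_def by blast
  define L where "L = (\<Sum>l<i. fps_const (d l) * x l)"
  have "L \<in> M"
    unfolding L_def using x
    by (auto intro!: max_ideal_sum max_ideal_const_mult)
  moreover have "m \<in> M" using m ideal_sq_subset_max_ideal by blast
  ultimately have "\<alpha> = 0" using Q(2) by (simp add: Q_eq L_def[symmetric] mem_max_ideal)
  then have m_eq: "m = Q - L" by (simp add: Q_eq L_def)
  show ?thesis
  proof (cases "L = 0")
    case True
    then show ?thesis using m m_eq Q(3) by (auto intro: val_memI)
  next
    case False
    then have L_val: "subdegree L \<in> (\<lambda>l. subdegree (x l)) ` {..<i}"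
      using subdegree_lincomb[OF _ inj L_def] x by blast
    consider "subdegree Q = subdegree L" | "subdegree Q < subdegree L" | "subdegree L < subdegree Q"
      by linarith
    then show ?thesis
    proof cases
      case 2
      then have "subdegree m = subdegree Q" "m \<noteq> 0"
        using m_eq Q(3) subdegree_diff_eq1[of Q L] by auto
      then show ?thesis using m val_memI[of m M2] by auto
    next
      case 3
      then have "subdegree m = subdegree L" "m \<noteq> 0"
        using m_eq False subdegree_diff_eq2[of L Q] by auto
      then have "subdegree L \<in> val M2" using m val_memI[of m M2] by auto
      then show ?thesis using L_val new by auto
    qed (use L_val in auto)
  qed
qed

lemma finite_hk_values: "finite hk_values"
proof -
  obtain c where c: "c \<ge> 1" "\<And>f. vanishes_below c f \<Longrightarrow> f \<in> R" using conductor by metis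
  have X_power: "fps_X ^ w \<in> M" if "c \<le> w" for w
    using c that by (auto simp: mem_max_ideal vanishes_below_def)
  have "w \<in> val M2" if "2 * c \<le> w" for w
  proof -
    have "fps_X ^ c * fps_X ^ (w - c) \<in> M2"
      using that by (intro ideal_sq_mult X_power) auto
    moreover have "fps_X ^ c * fps_X ^ (w - c) = (fps_X ^ w :: 'a fps)"
      using that by (simp flip: power_add)
    ultimately show ?thesis using val_memI[of "fps_X ^ w" M2] by (simp add: fps_X_power_subdegree)
  qed
  then have "hk_values \<subseteq> {..<2 * c}" by (auto simp: not_less[symmetric])
  then show ?thesis by (rule finite_subset) simp
qed

text \<open>The least value of \<open>M\<close> is not a value of \<open>M\<^sup>2\<close>, whose elements vanish to twice that order.\<close>

lemma hk_values_nonempty: "hk_values \<noteq> {}"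
proof -
  obtain c where c: "c \<ge> 1" "\<And>f. vanishes_below c f \<Longrightarrow> f \<in> R" using conductor by metis
  then have "fps_X ^ c \<in> M" by (auto simp: mem_max_ideal vanishes_below_def)
  then have "c \<in> val M" using val_memI[of "fps_X ^ c" M] by (simp add: fps_X_power_subdegree)
  define m0 where "m0 = (LEAST w. w \<in> val M)"
  have m0: "m0 \<in> val M" unfolding m0_def using \<open>c \<in> val M\<close> by (rule LeastI)
  then obtain f where f: "f \<in> M" "f \<noteq> 0" "subdegree f = m0" by (rule val_memE)
  then have "m0 \<noteq> 0" by (metis mem_max_ideal nth_subdegree_nonzero)
  have vanish: "vanishes_below m0 g" if "g \<in> M" for g
  proof (cases "g = 0")
    case False
    then have "m0 \<le> subdegree g" using that val_memI[of g M] by (simp add: m0_def Least_le)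
    then show ?thesis by (simp add: vanishes_below_iff)
  qed simp
  have "m0 \<notin> val M2"
  proof
    assume "m0 \<in> val M2"
    then obtain e where e: "e \<in> M2" "e \<noteq> 0" "subdegree e = m0" by (rule val_memE)
    then obtain K :: nat and a b where "e = (\<Sum>l<K. a l * b l)" "\<forall>l<K. a l \<in> M \<and> b l \<in> M"
      unfolding mem_ideal_sq by blast
    then have "vanishes_below (m0 + m0) e"
      by (auto intro!: vanishes_below_sum vanishes_below_mult vanish)
    then show False using e \<open>m0 \<noteq> 0\<close> by (simp add: vanishes_below_iff)
  qed
  then show ?thesis using m0 by blast
qed

text \<open>Approximating to order \<open>v(s) + c\<close>, for \<open>s \<in> S\<close> nonzero and \<open>c\<close> the conductor, leaves an error
  in \<open>s t\<^sup>c k[[t]] \<subseteq> s R \<subseteq> I\<close>.\<close>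

lemma proper_ideal_eq_max_ideal:
  assumes I: "proper_ideal I" and SI: "S \<subseteq> I" and vals: "hk_values \<subseteq> val S"
  shows "I = M"
proof
  show "I \<subseteq> M" using I by (simp add: proper_ideal_def)
  have SM: "S \<subseteq> M" using SI I by (auto simp: proper_ideal_def)
  obtain s where s: "s \<in> S" "s \<noteq> 0"
    using hk_values_nonempty vals by (auto simp: val_def)
  obtain c where c: "\<And>f. vanishes_below c f \<Longrightarrow> f \<in> R" using conductor by blast
  have approx: "poly_approximable S M (subdegree s + c)"
    using vals by (intro poly_approximable_max_ideal[OF SM _ order_refl]) auto
  show "M \<subseteq> I"
  proof
    fix f assume "f \<in> M"
    then obtain p where p: "p \<in> k_alg S \<inter> M" "vanishes_below (subdegree s + c) (f - p)"
      using approx by (auto simp: poly_approximable_def)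
    obtain w where w: "vanishes_below c w" "f - p = s * w"
      using vanishes_below_dvdE[OF s(2) p(2)] .
    have "w * s \<in> I" using I SI s(1) c[OF w(1)] by (auto simp: proper_ideal_def)
    moreover have "p \<in> I" using k_alg_in_proper_ideal[OF I SI] p(1) by (simp add: mem_max_ideal)
    ultimately have "p + (f - p) \<in> I" using I w(2) by (simp add: proper_ideal_def mult.commute)
    then show "f \<in> I" by simp
  qed
qed

end

section \<open>The construction\<close>

locale minimally_generated_branch = local_branch +
  fixes y :: "nat \<Rightarrow> 'a fps" and n :: nat
  assumes minimal: "minimal_generators R (max_ideal R) n y"
begin

lemma generator_mem: "j < n \<Longrightarrow> y j \<in> M"
  using minimal by (simp add: minimal_generators_def)

lemma max_ideal_eq_R_span: "M = R_span {..<n} y"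
  using minimal by (simp add: minimal_generators_def generates_iff_R_span)

lemma not_generates_without: "j < n \<Longrightarrow> \<not> generates R M ({..<n} - {j}) y"
  using minimal by (simp add: minimal_generators_def)

text \<open>\<open>M = \<Sum> R y\<^sub>j \<subseteq> \<Sum> k y\<^sub>j + M\<^sup>2\<close>, so approximating the generators and \<open>M\<^sup>2\<close> approximates \<open>M\<close>.\<close>

lemma poly_approximable_of_generators:
  assumes gens: "\<And>j. j < n \<Longrightarrow> \<exists>q \<in> k_alg S \<inter> M. vanishes_below K (y j - q)"
    and sq: "poly_approximable S M2 K"
  shows "poly_approximable S M K"
  unfolding poly_approximable_def
proof
  fix f assume "f \<in> M"
  then obtain r where r: "f = (\<Sum>j<n. r j * y j)" "\<forall>j<n. r j \<in> R"
    using max_ideal_eq_R_span by (auto simp: R_span_def)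
  define g where "g = (\<Sum>j<n. (r j - fps_const (r j $ 0)) * y j)"
  have "g \<in> M2"
    unfolding g_def using r(2) generator_mem
    by (intro ideal_sq_sum ideal_sq_mult) (auto simp: mem_max_ideal R_diff R_const)
  then obtain p where p: "p \<in> k_alg S \<inter> M2" "vanishes_below K (g - p)"
    using sq by (auto simp: poly_approximable_def)
  obtain q where q: "\<And>j. j < n \<Longrightarrow> q j \<in> k_alg S \<inter> M \<and> vanishes_below K (y j - q j)"
    using gens by metis
  define Q where "Q = (\<Sum>j<n. fps_const (r j $ 0) * q j) + p"
  have "Q \<in> k_alg S \<inter> M"
    unfolding Q_def using q p ideal_sq_subset_max_ideal
    by (auto intro!: k_alg.add k_alg_sum k_alg_const_mult max_ideal_add
        max_ideal_sum max_ideal_const_mult)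
  moreover have "f - Q = (\<Sum>j<n. fps_const (r j $ 0) * (y j - q j)) + (g - p)"
    unfolding r(1) Q_def g_def by (simp add: sum_subtractf sum_distrib_left algebra_simps)
  then have "vanishes_below K (f - Q)"
    using q p(2) by (auto intro!: vanishes_below_add vanishes_below_sum vanishes_below_const_mult)
  ultimately show "\<exists>Q \<in> k_alg S \<inter> M. vanishes_below K (f - Q)" by blast
qed

abbreviation hk :: "nat list" where
  "hk \<equiv> sorted_list_of_set hk_values"

lemma set_hk: "set hk = hk_values"
  using finite_hk_values by simp

lemma nth_hk_mem: "l < length hk \<Longrightarrow> hk ! l \<in> hk_values"
  using nth_mem set_hk by metis

lemma hk_strict_mono: "l < l' \<Longrightarrow> l' < length hk \<Longrightarrow> hk ! l < hk ! l'"
  using sorted_wrt_nth_less[OF strict_sorted_list_of_set] by blast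

lemma hk_values_below_nth:
  assumes "w \<in> hk_values" "i < length hk" "w < hk ! i"
  shows "\<exists>l<i. hk ! l = w"
proof -
  obtain l where l: "l < length hk" "hk ! l = w"
    using assms(1) set_hk by (metis in_set_conv_nth)
  then have "l < i"
    using assms(2,3) hk_strict_mono[of i l] by (cases "l < i") (auto simp: not_less nat_less_le)
  then show ?thesis using l by blast
qed

text \<open>The first \<open>i\<close> steps of the construction: \<open>\<sigma>\<close> records which generator was used at each step.\<close>

definition partial_solution :: "nat \<Rightarrow> (nat \<Rightarrow> nat) \<Rightarrow> (nat \<Rightarrow> 'a fps) \<Rightarrow> (nat \<Rightarrow> 'a fps) \<Rightarrow> bool" where
  "partial_solution i \<sigma> x z \<longleftrightarrow> inj_on \<sigma> {..<i} \<and> \<sigma> ` {..<i} \<subseteq> {..<n} \<and>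
     (\<forall>l<i. x l \<in> M \<and> x l \<noteq> 0 \<and> subdegree (x l) = hk ! l \<and>
         z l \<in> k_alg (x ` {..<l}) \<and> y (\<sigma> l) = x l + z l) \<and>
     (0 < i \<longrightarrow> z 0 = 0)"

lemma partial_solution_generators_in_k_alg:
  assumes "partial_solution i \<sigma> x z"
  shows "y ` \<sigma> ` {..<i} \<subseteq> k_alg (x ` {..<i})"
proof
  fix f assume "f \<in> y ` \<sigma> ` {..<i}"
  then obtain l where l: "l < i" "f = x l + z l"
    using assms by (auto simp: partial_solution_def)
  have "z l \<in> k_alg (x ` {..<i})"
    using assms l(1) by (auto simp: partial_solution_def intro: k_alg_mono[of "x ` {..<l}"])
  then show "f \<in> k_alg (x ` {..<i})" using l by (auto intro: k_alg.add k_alg.gen)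
qed

lemma partial_solution_in_k_alg_generators:
  assumes "partial_solution i \<sigma> x z"
  shows "x ` {..<i} \<subseteq> k_alg (y ` \<sigma> ` {..<i})"
proof -
  have "x l \<in> k_alg (y ` \<sigma> ` {..<i})" if "l < i" for l
    using that
  proof (induction l rule: less_induct)
    case (less l)
    then have "x ` {..<l} \<subseteq> k_alg (y ` \<sigma> ` {..<i})" by auto
    moreover have "z l \<in> k_alg (x ` {..<l})" "x l = y (\<sigma> l) - z l"
      using assms less.prems by (auto simp: partial_solution_def)
    ultimately show ?case
      using less.prems by (auto intro: k_alg_diff k_alg.gen k_alg_subset_k_alg)
  qed
  then show ?thesis by auto
qed

lemma partial_solution_poly_approximable:
  assumes ps: "partial_solution i \<sigma> x z" and i: "i < length hk"
  shows "poly_approximable (x ` {..<i}) M (hk ! i)"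
proof (rule poly_approximable_max_ideal[OF _ _ order_refl])
  show "x ` {..<i} \<subseteq> M" using ps by (auto simp: partial_solution_def)
  show "{w \<in> hk_values. w < hk ! i} \<subseteq> val (x ` {..<i})"
  proof
    fix w assume "w \<in> {w \<in> hk_values. w < hk ! i}"
    then obtain l where "l < i" "hk ! l = w" using hk_values_below_nth[OF _ i] by auto
    then show "w \<in> val (x ` {..<i})"
      using ps val_memI[of "x l" "x ` {..<i}"] by (auto simp: partial_solution_def)
  qed
qed

lemma partial_solution_value_not_reached:
  assumes ps: "partial_solution i \<sigma> x z" and i: "i < length hk"
    and Q: "Q \<in> k_alg (x ` {..<i}) \<inter> M" "Q \<noteq> 0"
  shows "subdegree Q \<noteq> hk ! i"
proof
  assume Q_val: "subdegree Q = hk ! i"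
  have x: "\<And>l. l < i \<Longrightarrow> x l \<in> M \<and> x l \<noteq> 0 \<and> subdegree (x l) = hk ! l"
    using ps by (simp add: partial_solution_def)
  have "inj_on (\<lambda>l. subdegree (x l)) {..<i}"
  proof (rule inj_on_cong[THEN iffD2])
    show "inj_on (nth hk) {..<i}" using i by (intro inj_on_nth) auto
  qed (use x in auto)
  moreover have "subdegree (x l) \<notin> val M2" if "l < i" for l
    using x[OF that] i that nth_hk_mem[of l] by auto
  ultimately have "hk ! i \<in> (\<lambda>l. subdegree (x l)) ` {..<i} \<union> val M2"
    using subdegree_k_alg[of i x Q] x Q Q_val by simp
  moreover have "hk ! i \<notin> val M2" using nth_hk_mem[OF i] by simp
  ultimately obtain l where l: "l < i" "hk ! i = subdegree (x l)" by auto
  then show False using x[OF l(1)] hk_strict_mono[OF l(1) i] by simp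
qed

text \<open>Approximate every generator modulo \<open>t\<^sup>N\<close>, exactly for the generators already used.
  If all remaining errors also vanished at \<open>t\<^sup>N\<close>, then \<open>M\<close> would be approximable modulo
  \<open>t\<^sup>N\<^sup>+\<^sup>1\<close>, so \<open>N \<in> v(M)\<close> would be a value of \<open>k[x\<^sub>0, \<dots>, x\<^sub>i\<^sub>-\<^sub>1] \<inter> M\<close>.\<close>

lemma partial_solution_next_generator:
  assumes ps: "partial_solution i \<sigma> x z" and i: "i < length hk"
  obtains j q where "j < n" "j \<notin> \<sigma> ` {..<i}" "q \<in> k_alg (x ` {..<i}) \<inter> M"
    "y j - q \<noteq> 0" "subdegree (y j - q) = hk ! i"
proof -
  define S where "S = x ` {..<i}"
  define N where "N = hk ! i"
  have approx: "poly_approximable S M N"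
    unfolding S_def N_def by (rule partial_solution_poly_approximable[OF ps i])
  have "\<forall>j\<in>{..<n}. \<exists>q. q \<in> k_alg S \<inter> M \<and> vanishes_below N (y j - q) \<and> (j \<in> \<sigma> ` {..<i} \<longrightarrow> q = y j)"
  proof
    fix j :: nat assume "j \<in> {..<n}"
    then have "y j \<in> M" by (simp add: generator_mem)
    show "\<exists>q. q \<in> k_alg S \<inter> M \<and> vanishes_below N (y j - q) \<and> (j \<in> \<sigma> ` {..<i} \<longrightarrow> q = y j)"
    proof (cases "j \<in> \<sigma> ` {..<i}")
      case True
      then show ?thesis
        using partial_solution_generators_in_k_alg[OF ps] \<open>y j \<in> M\<close> by (auto simp: S_def)
    next
      case False
      then show ?thesis using approx \<open>y j \<in> M\<close> by (auto simp: poly_approximable_def)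
    qed
  qed
  then obtain q where "\<forall>j\<in>{..<n}. q j \<in> k_alg S \<inter> M \<and> vanishes_below N (y j - q j) \<and>
      (j \<in> \<sigma> ` {..<i} \<longrightarrow> q j = y j)"
    by (rule bchoice [elim_format]) blast
  then have q: "\<And>j. j < n \<Longrightarrow> q j \<in> k_alg S \<inter> M \<and> vanishes_below N (y j - q j) \<and>
      (j \<in> \<sigma> ` {..<i} \<longrightarrow> q j = y j)"
    by simp
  have "\<exists>j<n. j \<notin> \<sigma> ` {..<i} \<and> (y j - q j) $ N \<noteq> 0"
  proof (rule ccontr)
    assume none: "\<not> ?thesis"
    have "\<exists>q \<in> k_alg S \<inter> M. vanishes_below (Suc N) (y j - q)" if "j < n" for j
    proof (intro bexI conjI)
      show "q j \<in> k_alg S \<inter> M" using q[OF that] by blast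
      show "vanishes_below (Suc N) (y j - q j)"
        using q[OF that] none that by (cases "j \<in> \<sigma> ` {..<i}") (auto simp: vanishes_below_Suc)
    qed
    then have approx_Suc: "poly_approximable S M (Suc N)"
      by (rule poly_approximable_of_generators[OF _ poly_approximable_ideal_sq_Suc[OF approx]])
    have "N \<in> val M" using nth_hk_mem[OF i] by (simp add: N_def)
    then obtain u where u: "u \<in> M" "u \<noteq> 0" "subdegree u = N" by (rule val_memE)
    then obtain Q where Q: "Q \<in> k_alg S \<inter> M" "vanishes_below (Suc N) (u - Q)"
      using approx_Suc by (auto simp: poly_approximable_def)
    have "vanishes_below N Q"
      using vanishes_below_diff[OF vanishes_below_subdegree[of u] vanishes_below_mono[OF Q(2)]] u(3)
      by simp
    moreover have "Q $ N \<noteq> 0" using Q(2) u by (auto simp: vanishes_below_Suc)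
    ultimately have "Q \<noteq> 0" "subdegree Q = N" using subdegree_eq_if_vanishes_below by blast+
    then show False
      using partial_solution_value_not_reached[OF ps i] Q(1) by (simp add: S_def N_def)
  qed
  then obtain j where j: "j < n" "j \<notin> \<sigma> ` {..<i}" "(y j - q j) $ N \<noteq> 0" by blast
  then show ?thesis
    using that[of j "q j"] q[OF j(1)] subdegree_eq_if_vanishes_below[of N "y j - q j"]
    by (auto simp: S_def N_def)
qed

lemma partial_solution_Suc:
  assumes ps: "partial_solution i \<sigma> x z" and i: "i < length hk"
  obtains \<sigma>' x' z' where "partial_solution (Suc i) \<sigma>' x' z'"
proof -
  obtain j q where j: "j < n" "j \<notin> \<sigma> ` {..<i}" and q: "q \<in> k_alg (x ` {..<i}) \<inter> M"
    and yq: "y j - q \<noteq> 0" "subdegree (y j - q) = hk ! i"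
    using partial_solution_next_generator[OF ps i] .
  have q0: "q = 0" if "i = 0"
    using q k_alg_empty[of q] that by (auto simp: mem_max_ideal)
  define \<sigma>' where "\<sigma>' = \<sigma>(i := j)"
  define x' where "x' = x(i := y j - q)"
  define z' where "z' = z(i := q)"
  have x'_img: "x' ` {..<l} = x ` {..<l}" if "l \<le> i" for l
    using that by (auto simp: x'_def)
  have "inj_on \<sigma>' {..<Suc i}"
    using ps j(2) by (auto simp: partial_solution_def \<sigma>'_def lessThan_Suc inj_on_def)
  moreover have "\<sigma>' ` {..<Suc i} \<subseteq> {..<n}"
    using ps j(1) by (auto simp: partial_solution_def \<sigma>'_def lessThan_Suc)
  moreover have "x' l \<in> M \<and> x' l \<noteq> 0 \<and> subdegree (x' l) = hk ! l \<and>
      z' l \<in> k_alg (x' ` {..<l}) \<and> y (\<sigma>' l) = x' l + z' l" if "l < Suc i" for l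
  proof (cases "l = i")
    case True
    then show ?thesis
      using q yq generator_mem[OF j(1)] x'_img[of i]
      by (auto simp: x'_def z'_def \<sigma>'_def intro: max_ideal_diff)
  next
    case False
    then show ?thesis
      using ps that x'_img[of l] by (auto simp: partial_solution_def x'_def z'_def \<sigma>'_def)
  qed
  moreover have "z' 0 = 0"
    using ps q0 by (cases "i = 0") (auto simp: partial_solution_def z'_def)
  ultimately have "partial_solution (Suc i) \<sigma>' x' z'"
    by (simp add: partial_solution_def)
  then show ?thesis by (rule that)
qed

lemma partial_solution_exists: "i \<le> length hk \<Longrightarrow> \<exists>\<sigma> x z. partial_solution i \<sigma> x z"
proof (induction i)
  case 0
  show ?case by (simp add: partial_solution_def)
next
  case (Suc i)
  then obtain \<sigma> x z where "partial_solution i \<sigma> x z" by auto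
  then show ?case using partial_solution_Suc Suc.prems by (metis Suc_le_eq)
qed

lemma partial_solution_le: "partial_solution i \<sigma> x z \<Longrightarrow> i \<le> n"
  using card_inj_on_le[of \<sigma> "{..<i}" "{..<n}"] by (simp add: partial_solution_def)

text \<open>If a generator \<open>y\<^sub>j\<close> were never used, the ideal generated by the others would contain every
  \<open>x\<^sub>l\<close>, hence realize all of \<open>v(M) - v(M\<^sup>2)\<close>, hence be \<open>M\<close>: this contradicts minimality.\<close>

lemma partial_solution_ge:
  assumes ps: "partial_solution (length hk) \<sigma> x z"
  shows "n \<le> length hk"
proof (rule ccontr)
  define L where "L = length hk"
  assume "\<not> n \<le> length hk"
  then have "\<not> {..<n} \<subseteq> \<sigma> ` {..<L}"
    using card_mono[of "\<sigma> ` {..<L}" "{..<n}"] card_image_le[of "{..<L}" \<sigma>] by (auto simp: L_def)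
  then obtain j where j: "j < n" "j \<notin> \<sigma> ` {..<L}" by auto
  define T where "T = {..<n} - {j}"
  define I where "I = R_span T y"
  have I: "proper_ideal I"
    unfolding I_def T_def using generator_mem by (intro proper_ideal_R_span) auto
  have used: "y ` \<sigma> ` {..<L} \<subseteq> I"
    using ps j(2) by (auto simp: partial_solution_def I_def T_def L_def intro!: R_span_generator)
  have x: "\<And>l. l < L \<Longrightarrow> x l \<in> M \<and> x l \<noteq> 0 \<and> subdegree (x l) = hk ! l"
    using ps by (simp add: partial_solution_def L_def)
  have "x ` {..<L} \<subseteq> I"
  proof
    fix f assume f: "f \<in> x ` {..<L}"
    then have "f \<in> k_alg (y ` \<sigma> ` {..<L})"
      using partial_solution_in_k_alg_generators[OF ps] by (auto simp: L_def)
    moreover have "f $ 0 = 0" using f x by (auto simp: mem_max_ideal)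
    ultimately show "f \<in> I" by (rule k_alg_in_proper_ideal[OF I used])
  qed
  moreover have "hk_values \<subseteq> val (x ` {..<L})"
  proof
    fix w assume "w \<in> hk_values"
    then obtain l where "l < L" "w = hk ! l" using set_hk by (metis in_set_conv_nth L_def)
    then show "w \<in> val (x ` {..<L})" using x[of l] val_memI[of "x l"] by auto
  qed
  ultimately have "I = M" by (rule proper_ideal_eq_max_ideal[OF I])
  then show False using not_generates_without[OF j(1)] by (simp add: generates_iff_R_span I_def T_def)
qed

end

theorem mainTheorem13:
  fixes R :: "'a::field fps set" and y :: "nat \<Rightarrow> 'a fps" and n :: nat
  assumes "complete_local_branch R"
    and "minimal_generators R (max_ideal R) n y"
  shows "length (herzog_kunz R) = n \<and>
    (\<exists>\<sigma>. bij_betw \<sigma> {..<n} {..<n} \<and>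
      (\<exists>x z. (\<forall>i<n. x i \<in> R \<and> x i \<noteq> 0 \<and> subdegree (x i) = herzog_kunz R ! i \<and>
                     z i \<in> R \<and> z i \<in> k_alg (x ` {..<i}) \<and>
                     y (\<sigma> i) = x i + z i)
             \<and> (0 < n \<longrightarrow> z 0 = 0)))"
proof -
  interpret minimally_generated_branch R y n
    using assms by (simp add: minimally_generated_branch_def minimally_generated_branch_axioms_def local_branch_def)
  have hk: "herzog_kunz R = hk" by (simp add: herzog_kunz_def)
  obtain \<sigma> x z where ps: "partial_solution (length hk) \<sigma> x z"
    using partial_solution_exists by blast
  have n: "length hk = n"
    using partial_solution_le[OF ps] partial_solution_ge[OF ps] by simp
  with ps have "bij_betw \<sigma> {..<n} {..<n}"
    by (simp add: partial_solution_def bij_betw_def endo_inj_surj)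
  moreover have "x i \<in> R \<and> z i \<in> R" if "i < n" for i
  proof -
    have "\<sigma> i < n" "x i \<in> M" "z i = y (\<sigma> i) - x i"
      using ps that n by (auto simp: partial_solution_def)
    then show ?thesis by (simp add: max_ideal_subset_R max_ideal_diff generator_mem)
  qed
  ultimately show ?thesis
    using ps n unfolding hk partial_solution_def by (intro conjI exI[of _ \<sigma>] exI[of _ x] exI[of _ z]) auto
qed

end
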